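(* Assume the setup in the context and suppose $K\le n-4$. Then $T=K$ on the event $\{\epsilon_1=\epsilon_2=\cdots=\epsilon_K\}$ (which has probability $2^{1-K}$), and $T\ge K+2$ on its complement. Moreover, if $K=n-3$, then still $P(T=K)=2^{1-K}$ and $T\ge K+1$ on the complement of $\{T=K\}$.
   Context: Let $n\ge4$ and let $v_1,\dots,v_n$ be real numbers with $\sum_{i=1}^n v_i^2\le1$ ordered so that $v_n\ge v_1\ge v_{n-1}\ge v_2\ge v_3\ge\cdots\ge v_{n-2}\ge0$. Let $\epsilon_1,\dots,\epsilon_n$ be independent Rademacher random variables ($\pm1$ with probability $\tfrac12$ each). For $t\in\{1,\dots,n-1\}$ put $X_t:=\sum_{i=1}^t v_i\epsilon_i$, and for $t\in\{1,\dots,n\}$ put $M_t:=\sum_{i=1}^t v_i$. Define the random time $T:=\min\big(\{t\le n-1: |X_t|>1-v_{t+1}\}\cup\{n-1\}\big)$ and the deterministic index $K:=\min\big(\{t\le n-1: M_t>1-v_{t+1}\}\cup\{n-1\}\big)$. *)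

theory Defs
  imports "HOL-Probability.Probability"
begin

text \<open>Sign vectors (epsilon_1,...,epsilon_n), each entry in {-1,1}; the uniform
distribution on this set is exactly the law of n independent Rademacher variables.\<close>
definition signs :: "nat \<Rightarrow> (nat \<Rightarrow> real) set" where
  "signs n = PiE {1..n} (\<lambda>_. {-1, 1})"

definition rademacher :: "nat \<Rightarrow> (nat \<Rightarrow> real) pmf" where
  "rademacher n = pmf_of_set (signs n)"

definition Xs :: "(nat \<Rightarrow> real) \<Rightarrow> (nat \<Rightarrow> real) \<Rightarrow> nat \<Rightarrow> real" where
  "Xs v e t = (\<Sum>i = 1..t. v i * e i)"

definition Ms :: "(nat \<Rightarrow> real) \<Rightarrow> nat \<Rightarrow> real" where
  "Ms v t = (\<Sum>i = 1..t. v i)"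

definition stopT :: "nat \<Rightarrow> (nat \<Rightarrow> real) \<Rightarrow> (nat \<Rightarrow> real) \<Rightarrow> nat" where
  "stopT n v e = Min ({t \<in> {1..n-1}. \<bar>Xs v e t\<bar> > 1 - v (t+1)} \<union> {n-1})"

definition idxK :: "nat \<Rightarrow> (nat \<Rightarrow> real) \<Rightarrow> nat" where
  "idxK n v = Min ({t \<in> {1..n-1}. Ms v t > 1 - v (t+1)} \<union> {n-1})"

end

theory Submission
  imports Defs
begin

text \<open>Since \<open>\<bar>X\<^sub>t\<bar> \<le> M\<^sub>t\<close>, the walk cannot cross its threshold
  \<open>1 - v\<^sub>t\<^sub>+\<^sub>1\<close> before \<open>M\<close> does, so \<open>T \<ge> K\<close>. If \<open>\<epsilon>\<^sub>1, \<dots>, \<epsilon>\<^sub>K\<close> agree then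
  \<open>\<bar>X\<^sub>K\<bar> = M\<^sub>K\<close> and \<open>T = K\<close>. Otherwise some \<open>2 \<le> j \<le> K\<close> has \<open>\<epsilon>\<^sub>j \<noteq> \<epsilon>\<^sub>1\<close>, which costs
  \<open>2 min v\<^sub>1 v\<^sub>j \<ge> 2 v\<^sub>K\<close>; together with \<open>M\<^sub>K\<^sub>-\<^sub>1 \<le> 1 - v\<^sub>K\<close> this gives
  \<open>\<bar>X\<^sub>K\<bar> \<le> 1 - 2 v\<^sub>K\<close>, and the monotonicity of \<open>v\<close> on \<open>{2..n-2}\<close> keeps \<open>X\<^sub>K\<close>, and
  \<open>X\<^sub>K\<^sub>+\<^sub>1\<close> when \<open>K \<le> n - 4\<close>, below their thresholds. The agreeing sign vectors are
  \<open>2 \<cdot> 2\<^sup>n\<^sup>-\<^sup>K\<close> of the \<open>2\<^sup>n\<close>.\<close>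

lemma signs_memD: "e \<in> signs n \<Longrightarrow> i \<in> {1..n} \<Longrightarrow> e i = -1 \<or> e i = 1"
  unfolding signs_def using PiE_mem by fastforce

definition first_hit :: "nat \<Rightarrow> (nat \<Rightarrow> bool) \<Rightarrow> nat" where
  "first_hit N P = Min ({t \<in> {1..N}. P t} \<union> {N})"

lemma first_hit_le: "t \<in> {1..N} \<Longrightarrow> P t \<Longrightarrow> first_hit N P \<le> t"
  unfolding first_hit_def by (intro Min_le) auto

lemma first_hit_le_bound: "first_hit N P \<le> N"
  unfolding first_hit_def by (intro Min_le) auto

lemma first_hit_ge:
  assumes "m \<le> N" "\<And>t. t \<in> {1..N} \<Longrightarrow> P t \<Longrightarrow> m \<le> t"
  shows "m \<le> first_hit N P"
  unfolding first_hit_def using assms by (subst Min_ge_iff) auto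

lemma first_hit_ge_1: "1 \<le> N \<Longrightarrow> 1 \<le> first_hit N P"
  by (rule first_hit_ge) auto

lemma first_hit_hits:
  assumes "first_hit N P < N"
  shows "P (first_hit N P)"
proof -
  have "first_hit N P \<in> {t \<in> {1..N}. P t} \<union> {N}"
    unfolding first_hit_def by (intro Min_in) auto
  with assms show ?thesis by auto
qed

lemma not_before_first_hit: "1 \<le> t \<Longrightarrow> t < first_hit N P \<Longrightarrow> \<not> P t"
  using first_hit_le[of t N P] first_hit_le_bound[of N P] by fastforce

lemma stopT_eq_first_hit: "stopT n v e = first_hit (n - 1) (\<lambda>t. \<bar>Xs v e t\<bar> > 1 - v (t + 1))"
  unfolding stopT_def first_hit_def ..

lemma idxK_eq_first_hit: "idxK n v = first_hit (n - 1) (\<lambda>t. Ms v t > 1 - v (t + 1))"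
  unfolding idxK_def first_hit_def ..

lemma Ms_Suc [simp]: "Ms v (Suc t) = Ms v t + v (Suc t)"
  unfolding Ms_def by simp

lemma Xs_Suc [simp]: "Xs v e (Suc t) = Xs v e t + v (Suc t) * e (Suc t)"
  unfolding Xs_def by simp

lemma Xs_constant_signs: "\<forall>i\<in>{1..t}. e i = c \<Longrightarrow> Xs v e t = c * Ms v t"
  unfolding Xs_def Ms_def sum_distrib_left by (intro sum.cong) auto

context
  fixes n t :: nat and v e :: "nat \<Rightarrow> real"
  assumes e: "e \<in> signs n" and t_le: "t \<le> n" and nonneg: "\<And>i. i \<in> {1..t} \<Longrightarrow> 0 \<le> v i"
begin

private lemma weighted_sign_terms_nonneg:
  assumes "i \<in> {1..t}"
  shows "0 \<le> v i * (1 - e i)" "0 \<le> v i * (1 + e i)"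
proof -
  have "e i = -1 \<or> e i = 1" using signs_memD[OF e] assms t_le by auto
  then show "0 \<le> v i * (1 - e i)" "0 \<le> v i * (1 + e i)"
    using nonneg[OF assms] by auto
qed

private lemma Ms_minus_Xs: "Ms v t - Xs v e t = (\<Sum>i = 1..t. v i * (1 - e i))"
  unfolding Ms_def Xs_def by (simp add: sum_subtractf right_diff_distrib)

private lemma Ms_plus_Xs: "Ms v t + Xs v e t = (\<Sum>i = 1..t. v i * (1 + e i))"
  unfolding Ms_def Xs_def by (simp add: sum.distrib distrib_left)

lemma abs_Xs_le_Ms: "\<bar>Xs v e t\<bar> \<le> Ms v t"
proof -
  have "0 \<le> Ms v t - Xs v e t" "0 \<le> Ms v t + Xs v e t"
    unfolding Ms_minus_Xs Ms_plus_Xs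
    by (auto intro!: sum_nonneg weighted_sign_terms_nonneg)
  then show ?thesis by linarith
qed

lemma abs_Xs_le_Ms_opposite_signs:
  assumes "i \<in> {1..t}" "j \<in> {1..t}" "e i \<noteq> e j"
  shows "\<bar>Xs v e t\<bar> \<le> Ms v t - 2 * min (v i) (v j)"
proof -
  have term_minus: "v k * (1 - e k) \<le> Ms v t - Xs v e t" if "k \<in> {1..t}" for k
    unfolding Ms_minus_Xs using that
    by (rule member_le_sum) (auto intro: weighted_sign_terms_nonneg)
  have term_plus: "v k * (1 + e k) \<le> Ms v t + Xs v e t" if "k \<in> {1..t}" for k
    unfolding Ms_plus_Xs using that
    by (rule member_le_sum) (auto intro: weighted_sign_terms_nonneg)
  have "e i \<in> {-1, 1}" "e j \<in> {-1, 1}"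
    using signs_memD[OF e] assms t_le by auto
  with assms(3) have "e i = 1 \<and> e j = -1 \<or> e i = -1 \<and> e j = 1" by auto
  then show ?thesis
    using term_minus[OF assms(1)] term_minus[OF assms(2)]
      term_plus[OF assms(1)] term_plus[OF assms(2)]
    by (elim disjE conjE) (auto simp: abs_le_iff min_def)
qed

end

lemma measure_rademacher:
  "measure_pmf.prob (rademacher n) X = card (signs n \<inter> X) / 2 ^ n"
proof -
  have "finite (signs n)" "signs n \<noteq> {}"
    unfolding signs_def by (auto simp: finite_PiE PiE_eq_empty_iff)
  moreover have "card (signs n) = 2 ^ n"
    unfolding signs_def by (simp add: card_PiE numeral_2_eq_2)
  ultimately show ?thesis
    unfolding rademacher_def by (simp add: measure_pmf_of_set)
qed

lemma card_signs_constant_prefix: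
  assumes "1 \<le> K" "K \<le> n"
  shows "card (signs n \<inter> {e. \<forall>i\<in>{1..K}. e i = e 1}) = 2 * 2 ^ (n - K)"
proof -
  define F where "F s = PiE {1..n} (\<lambda>i. if i \<le> K then {s} else {-1, 1::real})" for s
  have mem_F: "e \<in> F s \<longleftrightarrow> e \<in> signs n \<and> (\<forall>i\<in>{1..K}. e i = s)" if "s \<in> {-1, 1}" for e s
    using that assms unfolding F_def signs_def by (auto simp: PiE_iff)
  have "signs n \<inter> {e. \<forall>i\<in>{1..K}. e i = e 1} = F (-1) \<union> F 1"
  proof (intro set_eqI iffI)
    fix e assume "e \<in> signs n \<inter> {e. \<forall>i\<in>{1..K}. e i = e 1}"
    then have e: "e \<in> signs n" "\<forall>i\<in>{1..K}. e i = e 1" by blast+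
    have e1: "e 1 \<in> {-1, 1}" using signs_memD[OF e(1), of 1] assms by simp
    then have "e \<in> F (e 1)" using mem_F[OF e1, of e] e by blast
    then show "e \<in> F (-1) \<union> F 1" using e1 by (metis UnI1 UnI2 insertE singletonD)
  next
    fix e assume "e \<in> F (-1) \<union> F 1"
    then obtain s where "s \<in> {-1, 1}" "e \<in> F s" by blast
    then have "e \<in> signs n" and e_s: "\<forall>i\<in>{1..K}. e i = s" using mem_F[of s e] by blast+
    moreover have "e 1 = s" using e_s assms by simp
    ultimately show "e \<in> signs n \<inter> {e. \<forall>i\<in>{1..K}. e i = e 1}" by simp
  qed
  moreover have "F (-1) \<inter> F 1 = {}"
  proof -
    have "e 1 = s" if "e \<in> F s" "s \<in> {-1, 1}" for e s
      using that mem_F[of s e] assms by simp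
    then have "e 1 = -1 \<and> e 1 = 1" if "e \<in> F (-1) \<inter> F 1" for e
      using that by blast
    then show ?thesis by force
  qed
  moreover have card_F: "card (F s) = 2 ^ (n - K)" for s
  proof -
    have "card (F s) = (\<Prod>i\<in>{1..n}. if i \<le> K then 1 else 2)"
      unfolding F_def by (auto simp: card_PiE intro!: prod.cong)
    also have "\<dots> = 2 ^ card ({1..n} \<inter> - {i. i \<le> K})"
      by (simp add: prod.If_cases)
    also have "{1..n} \<inter> - {i. i \<le> K} = {K<..n}" using assms by auto
    finally show ?thesis by simp
  qed
  moreover have "finite (F s)" for s
    unfolding F_def by (auto intro: finite_PiE)
  ultimately show ?thesis
    by (simp add: card_Un_disjoint)
qed

lemma prob_rademacher_constant_prefix:
  assumes "1 \<le> K" "K \<le> n"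
  shows "measure_pmf.prob (rademacher n) {e. \<forall>i\<in>{1..K}. e i = e 1} = 2 powr (1 - real K)"
proof -
  have "(2::real) ^ n = 2 ^ (n - K) * 2 ^ K"
    using assms by (simp flip: power_add)
  then show ?thesis
    unfolding measure_rademacher card_signs_constant_prefix[OF assms]
    by (simp add: powr_diff powr_realpow)
qed

locale ordered_weights =
  fixes n :: nat and v :: "nat \<Rightarrow> real"
  assumes n_ge_4: "n \<ge> 4"
    and first_le_last: "v 1 \<le> v n"
    and second_last_le_first: "v (n - 1) \<le> v 1"
    and second_le_second_last: "v 2 \<le> v (n - 1)"
    and decreasing: "\<And>i. 2 \<le> i \<Longrightarrow> i < n - 2 \<Longrightarrow> v (i + 1) \<le> v i"
    and nonneg_third_last: "0 \<le> v (n - 2)"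
begin

abbreviation K :: nat where "K \<equiv> idxK n v"

text \<open>As a simp premise this condition loops (it rewrites \<open>e 1\<close> to itself), so the proofs
  below keep it out of the simplifier's assumptions.\<close>
abbreviation constant_prefix :: "(nat \<Rightarrow> real) \<Rightarrow> bool" where
  "constant_prefix e \<equiv> \<forall>i\<in>{1..K}. e i = e 1"

lemma antimono:
  assumes "2 \<le> i" "i \<le> j" "j \<le> n - 2"
  shows "v j \<le> v i"
  using assms(2,3)
proof (induction j rule: dec_induct)
  case (step j)
  then show ?case using decreasing[of j] assms(1) by simp
qed simp

lemma le_first: "2 \<le> j \<Longrightarrow> j \<le> n - 2 \<Longrightarrow> v j \<le> v 1"
  using antimono[of 2 j] second_le_second_last second_last_le_first by simp

lemma nonneg:
  assumes "i \<in> {1..n}"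
  shows "0 \<le> v i"
proof -
  have "2 \<le> n - 2" using n_ge_4 by simp
  then have "0 \<le> v 2" using antimono[of 2 "n - 2"] nonneg_third_last by simp
  moreover have "2 \<le> i \<and> i \<le> n - 2 \<or> i = 1 \<or> i = n - 1 \<or> i = n" using assms n_ge_4 by auto
  ultimately show ?thesis
    using antimono[of i "n - 2"] nonneg_third_last first_le_last second_last_le_first
      second_le_second_last by auto
qed

lemma idxK_bounds: "1 \<le> K" "K \<le> n - 1"
  unfolding idxK_eq_first_hit
  by (rule first_hit_ge_1, use n_ge_4 in simp) (rule first_hit_le_bound)

lemma Ms_before_idxK: "1 \<le> t \<Longrightarrow> t < K \<Longrightarrow> Ms v t \<le> 1 - v (t + 1)"
  using not_before_first_hit[of t] unfolding idxK_eq_first_hit by fastforce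

lemma Ms_at_idxK: "K < n - 1 \<Longrightarrow> 1 - v (K + 1) < Ms v K"
  using first_hit_hits unfolding idxK_eq_first_hit by fastforce

lemma Ms_idxK_le_1:
  assumes "2 \<le> K"
  shows "Ms v K \<le> 1"
proof -
  obtain m where m: "K = Suc m" "1 \<le> m" using assms by (cases K) auto
  then show ?thesis using Ms_before_idxK[of m] by simp
qed

lemma abs_Xs_le_Ms_signs: "e \<in> signs n \<Longrightarrow> t \<le> n \<Longrightarrow> \<bar>Xs v e t\<bar> \<le> Ms v t"
  by (rule abs_Xs_le_Ms) (auto intro: nonneg)

lemma hit_ge_idxK:
  assumes "e \<in> signs n" "t \<in> {1..n - 1}" "1 - v (t + 1) < \<bar>Xs v e t\<bar>"
  shows "K \<le> t"
  using abs_Xs_le_Ms_signs[OF assms(1), of t] Ms_before_idxK[of t] assms(2,3) by fastforce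

lemma idxK_le_stopT: "e \<in> signs n \<Longrightarrow> K \<le> stopT n v e"
  unfolding stopT_eq_first_hit using idxK_bounds hit_ge_idxK by (auto intro: first_hit_ge)

lemma stopT_eq_idxK_if_constant_prefix:
  assumes e: "e \<in> signs n" and prefix: "constant_prefix e" and K_less: "K < n - 1"
  shows "stopT n v e = K"
proof -
  have "e 1 = -1 \<or> e 1 = 1" using signs_memD[OF e, of 1] n_ge_4 by simp
  moreover have "0 \<le> Ms v K" using abs_Xs_le_Ms_signs[OF e, of K] idxK_bounds by linarith
  ultimately have "\<bar>Xs v e K\<bar> = Ms v K"
    using Xs_constant_signs[OF prefix] by auto
  then have "stopT n v e \<le> K"
    unfolding stopT_eq_first_hit using Ms_at_idxK[OF K_less] idxK_bounds
    by (intro first_hit_le) auto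
  then show ?thesis using idxK_le_stopT[OF e] by simp
qed

lemma abs_Xs_idxK_if_mixed:
  assumes e: "e \<in> signs n" and mixed: "\<not> constant_prefix e" and K_le: "K \<le> n - 3"
  shows "2 \<le> K" "\<bar>Xs v e K\<bar> \<le> 1 - 2 * v K"
proof -
  obtain j where j: "j \<in> {1..K}" "e j \<noteq> e 1" using mixed by blast
  then have "2 \<le> j" by (cases "j = 1") auto
  with j show "2 \<le> K" by simp
  have "v j \<le> v 1" "v K \<le> v j"
    using le_first[of j] antimono[of j K] \<open>2 \<le> j\<close> j K_le by auto
  moreover have "\<bar>Xs v e K\<bar> \<le> Ms v K - 2 * min (v 1) (v j)"
    using j idxK_bounds K_le
    by (intro abs_Xs_le_Ms_opposite_signs[OF e]) (auto intro: nonneg)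
  ultimately show "\<bar>Xs v e K\<bar> \<le> 1 - 2 * v K"
    using Ms_idxK_le_1 \<open>2 \<le> K\<close> by (simp add: min_def split: if_splits)
qed

lemma no_hit_at_idxK_if_mixed:
  assumes e: "e \<in> signs n" and mixed: "\<not> constant_prefix e" and K_le: "K \<le> n - 3"
  shows "\<bar>Xs v e K\<bar> \<le> 1 - v (K + 1)"
proof -
  note K = abs_Xs_idxK_if_mixed[OF assms]
  have "v (K + 1) \<le> v K" "0 \<le> v K"
    using antimono[of K "K + 1"] nonneg[of K] K(1) K_le by auto
  then show ?thesis using K(2) by linarith
qed

lemma no_hit_after_idxK_if_mixed:
  assumes e: "e \<in> signs n" and mixed: "\<not> constant_prefix e" and K_le: "K \<le> n - 4"
  shows "\<bar>Xs v e (K + 1)\<bar> \<le> 1 - v (K + 2)"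
proof -
  have K: "2 \<le> K" "\<bar>Xs v e K\<bar> \<le> 1 - 2 * v K"
    using abs_Xs_idxK_if_mixed[OF e mixed] K_le by auto
  have "v (K + 2) \<le> v (K + 1)" "v (K + 1) \<le> v K" "0 \<le> v (K + 1)"
    using antimono[of "K + 1" "K + 2"] antimono[of K "K + 1"] nonneg[of "K + 1"] K(1) K_le
    by auto
  moreover have "e (K + 1) = -1 \<or> e (K + 1) = 1"
    using signs_memD[OF e, of "K + 1"] K_le n_ge_4 by simp
  ultimately show ?thesis
    using K(2) by (auto simp: abs_le_iff)
qed

lemma idxK_plus_1_le_stopT_if_mixed:
  assumes e: "e \<in> signs n" and mixed: "\<not> constant_prefix e" and K_le: "K \<le> n - 3"
  shows "K + 1 \<le> stopT n v e"
  unfolding stopT_eq_first_hit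
proof (rule first_hit_ge)
  fix t assume hit: "t \<in> {1..n - 1}" "1 - v (t + 1) < \<bar>Xs v e t\<bar>"
  have "t \<noteq> K" using hit(2) no_hit_at_idxK_if_mixed[OF assms] by auto
  with hit_ge_idxK[OF e hit] show "K + 1 \<le> t" by simp
qed (use K_le n_ge_4 in simp)

lemma idxK_plus_2_le_stopT_if_mixed:
  assumes e: "e \<in> signs n" and mixed: "\<not> constant_prefix e" and K_le: "K \<le> n - 4"
  shows "K + 2 \<le> stopT n v e"
  unfolding stopT_eq_first_hit
proof (rule first_hit_ge)
  fix t assume hit: "t \<in> {1..n - 1}" "1 - v (t + 1) < \<bar>Xs v e t\<bar>"
  have "K \<le> n - 3" using K_le by simp
  then have "t \<noteq> K" using hit(2) no_hit_at_idxK_if_mixed[OF e mixed] by auto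
  moreover have "t \<noteq> K + 1" using hit(2) no_hit_after_idxK_if_mixed[OF assms] by (auto simp: add.assoc)
  ultimately show "K + 2 \<le> t" using hit_ge_idxK[OF e hit] by simp
qed (use K_le n_ge_4 in simp)

lemma stopT_eq_idxK_iff:
  assumes e: "e \<in> signs n" and K_le: "K \<le> n - 3"
  shows "stopT n v e = K \<longleftrightarrow> constant_prefix e"
proof
  assume "stopT n v e = K"
  then show "constant_prefix e"
    using idxK_plus_1_le_stopT_if_mixed[OF e _ K_le] by fastforce
next
  assume "constant_prefix e"
  with e show "stopT n v e = K"
    by (rule stopT_eq_idxK_if_constant_prefix) (use K_le n_ge_4 in simp)
qed

end

theorem mainTheorem7:
  fixes n :: nat and v :: "nat \<Rightarrow> real"
  assumes n4: "n \<ge> 4"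
    and sq: "(\<Sum>i = 1..n. (v i)\<^sup>2) \<le> 1"
    and o1: "v 1 \<le> v n"
    and o2: "v (n-1) \<le> v 1"
    and o3: "v 2 \<le> v (n-1)"
    and o4: "\<And>i. 2 \<le> i \<Longrightarrow> i < n - 2 \<Longrightarrow> v (i+1) \<le> v i"
    and o5: "0 \<le> v (n-2)"
  shows
    "(idxK n v \<le> n - 4 \<longrightarrow>
        (\<forall>e \<in> signs n. (\<forall>i \<in> {1..idxK n v}. e i = e 1) \<longrightarrow> stopT n v e = idxK n v)
      \<and> (\<forall>e \<in> signs n. \<not> (\<forall>i \<in> {1..idxK n v}. e i = e 1) \<longrightarrow> stopT n v e \<ge> idxK n v + 2)
      \<and> measure_pmf.prob (rademacher n) {e. \<forall>i \<in> {1..idxK n v}. e i = e 1}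
          = 2 powr (1 - real (idxK n v)))
   \<and> (idxK n v = n - 3 \<longrightarrow>
        measure_pmf.prob (rademacher n) {e. stopT n v e = idxK n v} = 2 powr (1 - real (idxK n v))
      \<and> (\<forall>e \<in> signs n. stopT n v e \<noteq> idxK n v \<longrightarrow> stopT n v e \<ge> idxK n v + 1))"
proof -
  interpret ordered_weights n v
    using n4 o1 o2 o3 o4 o5 by unfold_locales
  have prefix_prob: "measure_pmf.prob (rademacher n) {e. constant_prefix e} = 2 powr (1 - real K)"
    using idxK_bounds by (intro prob_rademacher_constant_prefix) auto
  show ?thesis
  proof (intro conjI impI ballI)
    fix e assume K_le: "K \<le> n - 4" and e: "e \<in> signs n" and prefix: "constant_prefix e"
    show "stopT n v e = K"
      using stopT_eq_idxK_if_constant_prefix[OF e prefix] K_le n4 by simp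
  next
    fix e assume "K \<le> n - 4" "e \<in> signs n" "\<not> constant_prefix e"
    then show "K + 2 \<le> stopT n v e"
      by (intro idxK_plus_2_le_stopT_if_mixed)
  next
    show "measure_pmf.prob (rademacher n) {e. constant_prefix e} = 2 powr (1 - real K)"
      by (rule prefix_prob)
  next
    assume "K = n - 3"
    then have "signs n \<inter> {e. stopT n v e = K} = signs n \<inter> {e. constant_prefix e}"
      using stopT_eq_idxK_iff by (intro set_eqI) (simp only: Int_iff mem_Collect_eq, blast)
    then show "measure_pmf.prob (rademacher n) {e. stopT n v e = K} = 2 powr (1 - real K)"
      using prefix_prob by (simp only: measure_rademacher)
  next
    fix e assume "e \<in> signs n" "stopT n v e \<noteq> K"
    then show "K + 1 \<le> stopT n v e"
      using idxK_le_stopT by (simp add: Suc_le_eq le_neq_implies_less)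
  qed
qed

end
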